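(* Let $G$ be a scheduling game on two related machines $M_1,M_2$ with speeds $s_1=1$ and $s_2=s\le 1$ and arbitrary priority lists $\pi_1,\pi_2$, in which either all jobs have positive deterioration, or all jobs have negative deterioration and are delay-averse (i.e. $a_i\le 1$ for all $i$). Run the following algorithm: first assign all jobs to $M_1$; then for $k=1,\dots,n$, the job $i$ with $\pi_2(i)=k$ performs a best-response move with respect to the current profile, i.e. it moves to $M_2$ if and only if this strictly decreases its completion time. Then the resulting profile is a pure Nash equilibrium of $G$.
   Context: Scheduling game: a finite set $N$ of $n\ge1$ jobs (players) and a set $M$ of machines. Machine $j$ has speed $s_j>0$ and a priority list $\pi_j$, a bijection $N\to\{1,\dots,n\}$; job $u$ has higher priority than $v$ on $j$ iff $\pi_j(u)<\pi_j(v)$. Each job $i$ has a processing-time function $p_i$: with positive deterioration $p_i(t)=b_i+a_it$ ($b_i,a_i\ge0$), with negative deterioration $p_i(t)=\max\{\tau_i,b_i-a_it\}$ ($b_i,a_i\ge0$, $\tau_i>0$). A profile $\sigma\in M^N$ assigns each job to a machine. On machine $j$, the jobs assigned to it, listed in increasing $\pi_j$-order as $i_1,i_2,\dots$, are processed without idle time: $S_{i_1}(\sigma)=0$, $C_{i_k}(\sigma)=S_{i_k}(\sigma)+p_{i_k}(S_{i_k}(\sigma))/s_j$, $S_{i_{k+1}}(\sigma)=C_{i_k}(\sigma)$. The cost of job $i$ is $C_i(\sigma)$. A pure Nash equilibrium (NE) is a profile in which no job can strictly decrease its completion time by unilaterally changing its machine. A job is delay-averse if it has positive deterioration, or negative deterioration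 with $a_i\le \max_j s_j$. *)

theory Defs
  imports Complex_Main
begin

text \<open>A profile is sigma :: 'j => 'm.  prio m :: 'j => nat is the
priority list of machine m (a bijection N -> {1..card N}; smaller value = higher
priority), sp m > 0 is the speed of machine m, and p i :: real => real is the
processing-time function of job i (depending on its start time).\<close>

definition predecessors ::
  "'j set \<Rightarrow> ('m \<Rightarrow> 'j \<Rightarrow> nat) \<Rightarrow> ('j \<Rightarrow> 'm) \<Rightarrow> 'j \<Rightarrow> 'j list" where
  "predecessors N prio sigma i =
     (let m = sigma i in
      map (the_inv_into N (prio m))
        (sorted_list_of_set (prio m ` {k \<in> N. sigma k = m \<and> prio m k < prio m i})))"

definition start_time ::
  "'j set \<Rightarrow> ('m \<Rightarrow> 'j \<Rightarrow> nat) \<Rightarrow> ('j \<Rightarrow> real \<Rightarrow> real) \<Rightarrow> ('m \<Rightarrow> real)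
    \<Rightarrow> ('j \<Rightarrow> 'm) \<Rightarrow> 'j \<Rightarrow> real" where
  "start_time N prio p sp sigma i =
     foldl (\<lambda>t k. t + p k t / sp (sigma i)) 0 (predecessors N prio sigma i)"

definition completion_time ::
  "'j set \<Rightarrow> ('m \<Rightarrow> 'j \<Rightarrow> nat) \<Rightarrow> ('j \<Rightarrow> real \<Rightarrow> real) \<Rightarrow> ('m \<Rightarrow> real)
    \<Rightarrow> ('j \<Rightarrow> 'm) \<Rightarrow> 'j \<Rightarrow> real" where
  "completion_time N prio p sp sigma i =
     (let S = start_time N prio p sp sigma i in S + p i S / sp (sigma i))"

definition is_NE ::
  "'j set \<Rightarrow> 'm set \<Rightarrow> ('m \<Rightarrow> 'j \<Rightarrow> nat) \<Rightarrow> ('j \<Rightarrow> real \<Rightarrow> real) \<Rightarrow> ('m \<Rightarrow> real)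
    \<Rightarrow> ('j \<Rightarrow> 'm) \<Rightarrow> bool" where
  "is_NE N M prio p sp sigma \<longleftrightarrow>
     (\<forall>i\<in>N. sigma i \<in> M) \<and>
     (\<forall>i\<in>N. \<forall>m\<in>M.
        completion_time N prio p sp sigma i \<le> completion_time N prio p sp (sigma(i := m)) i)"

primrec alg_profile ::
  "'j set \<Rightarrow> ('m \<Rightarrow> 'j \<Rightarrow> nat) \<Rightarrow> ('j \<Rightarrow> real \<Rightarrow> real) \<Rightarrow> ('m \<Rightarrow> real)
    \<Rightarrow> 'm \<Rightarrow> 'm \<Rightarrow> nat \<Rightarrow> ('j \<Rightarrow> 'm)" where
  "alg_profile N prio p sp m1 m2 0 = (\<lambda>_. m1)"
| "alg_profile N prio p sp m1 m2 (Suc k) =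
     (let sigma = alg_profile N prio p sp m1 m2 k;
          i = the_inv_into N (prio m2) (Suc k);
          sigma' = sigma(i := m2)
      in if completion_time N prio p sp sigma' i < completion_time N prio p sp sigma i
         then sigma' else sigma)"

end

(* After step t of the algorithm, only jobs of m2-priority at most t are on m2, and each of
   these jobs plays a best response.  When the job i of priority t + 1 moves to m2, the jobs
   left on m1 only lose a competitor and the jobs ahead of i on m2 are unaffected.  The critical
   jobs are those x on m2 that would queue behind i on m1.  Since i moved, it starts on m2 no
   later than it would on m1: otherwise delay aversion and s <= 1 would make m1 at least as good
   for i.  So x completes on m2 before i starts there, hence before i would start on m1, which
   is no later than x could complete on m1. *)

theory Submission
  imports Defs "HOL-Library.Sublist"
begin

lemma sorted_list_of_set_split:
  fixes A :: "'a::linorder set"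
  assumes "finite A" and "B \<subseteq> A" and "\<forall>x\<in>B. \<forall>y\<in>A - B. x < y"
  shows "sorted_list_of_set A = sorted_list_of_set B @ sorted_list_of_set (A - B)"
proof -
  have "finite B" using assms(1,2) finite_subset by blast
  then show ?thesis
    using assms
    by (subst sorted_list_of_set_unique[symmetric])
       (auto simp: sorted_wrt_append card_Diff_subset card_mono)
qed

lemma sorted_list_of_set_subseq:
  fixes A :: "'a::linorder set"
  assumes "finite A" and "B \<subseteq> A"
  shows "subseq (sorted_list_of_set B) (sorted_list_of_set A)"
proof -
  have "sorted_list_of_set B = filter (\<lambda>x. x \<in> B) (sorted_list_of_set A)"
    using assms distinct_length_filter[of "sorted_list_of_set A"]
    by (subst sorted_list_of_set_unique[symmetric])
       (auto simp: sorted_wrt_filter Int_absorb2 intro: finite_subset)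
  then show ?thesis by simp
qed

lemma foldl_inflationary:
  fixes g :: "real \<Rightarrow> 'a \<Rightarrow> real"
  assumes "\<forall>x\<in>set xs. \<forall>t\<ge>0. t \<le> g t x" and "0 \<le> t0"
  shows "t0 \<le> foldl g t0 xs"
  using assms
proof (induction xs arbitrary: t0)
  case (Cons x xs)
  then have "t0 \<le> g t0 x" by simp
  also have "\<dots> \<le> foldl g (g t0 x) xs"
    using Cons calculation by (intro Cons.IH) auto
  finally show ?case by simp
qed simp

lemma foldl_subseq_mono:
  fixes g :: "real \<Rightarrow> 'a \<Rightarrow> real"
  assumes "subseq xs ys"
    and "\<forall>y\<in>set ys. \<forall>t\<ge>0. t \<le> g t y" and "\<forall>y\<in>set ys. mono_on {0..} (\<lambda>t. g t y)"
    and "0 \<le> t0" and "t0 \<le> t1"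
  shows "foldl g t0 xs \<le> foldl g t1 ys"
  using assms
proof (induction arbitrary: t0 t1 rule: list_emb.induct)
  case (list_emb_Nil ys)
  then show ?case using foldl_inflationary[of ys g t1] by simp
next
  case (list_emb_Cons xs ys y)
  have "t1 \<le> g t1 y" using list_emb_Cons.prems by simp
  then have "t0 \<le> g t1 y" using list_emb_Cons.prems(4) by linarith
  then have "foldl g t0 xs \<le> foldl g (g t1 y) ys"
    using list_emb_Cons by (intro list_emb_Cons.IH) auto
  then show ?case by simp
next
  case (list_emb_Cons2 x y xs ys)
  then have "x = y" by simp
  have "g t0 y \<le> g t1 y"
    using list_emb_Cons2.prems by (intro mono_onD[of "{0..}" "\<lambda>t. g t y"]) auto
  moreover have "0 \<le> g t0 y" using list_emb_Cons2.prems by force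
  ultimately show ?case using list_emb_Cons2 \<open>x = y\<close> by simp
qed

locale scheduling_game =
  fixes N :: "'j set" and prio :: "'m \<Rightarrow> 'j \<Rightarrow> nat"
    and p :: "'j \<Rightarrow> real \<Rightarrow> real" and sp :: "'m \<Rightarrow> real"
  assumes finite_jobs: "finite N"
    and processing_nonneg: "\<And>k t. k \<in> N \<Longrightarrow> 0 \<le> t \<Longrightarrow> 0 \<le> p k t"
begin

definition queue :: "'m \<Rightarrow> 'j set \<Rightarrow> 'j list" where
  "queue m K = map (the_inv_into N (prio m)) (sorted_list_of_set (prio m ` K))"

definition finish_time :: "'m \<Rightarrow> 'j set \<Rightarrow> real" where
  "finish_time m K = foldl (\<lambda>t k. t + p k t / sp m) 0 (queue m K)"

definition jobs_ahead :: "('j \<Rightarrow> 'm) \<Rightarrow> 'm \<Rightarrow> 'j \<Rightarrow> 'j set" where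
  "jobs_ahead \<sigma> m i = {k \<in> N. \<sigma> k = m \<and> prio m k < prio m i}"

lemma completion_time_fun_upd:
  "completion_time N prio p sp (\<sigma>(i := m)) i =
     (let S = finish_time m (jobs_ahead \<sigma> m i) in S + p i S / sp m)"
proof -
  have "{k \<in> N. (\<sigma>(i := m)) k = m \<and> prio m k < prio m i} = jobs_ahead \<sigma> m i"
    unfolding jobs_ahead_def by auto
  then show ?thesis
    unfolding completion_time_def start_time_def predecessors_def finish_time_def queue_def Let_def
    by (simp only: fun_upd_same)
qed

lemma completion_time_fun_upd_behind:
  assumes "\<not> prio m i < prio m x"
  shows "completion_time N prio p sp (\<sigma>(i := m', x := m)) x =
    completion_time N prio p sp (\<sigma>(x := m)) x"
proof -
  have "jobs_ahead (\<sigma>(i := m')) m x = jobs_ahead \<sigma> m x"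
    using assms by (auto simp: jobs_ahead_def)
  then show ?thesis by (simp add: completion_time_fun_upd)
qed

lemma set_queue:
  assumes "inj_on (prio m) N" and "K \<subseteq> N"
  shows "set (queue m K) = K"
proof -
  have "finite (prio m ` K)" using finite_jobs assms(2) finite_subset by blast
  moreover have "the_inv_into N (prio m) ` prio m ` K = K"
    using assms by (simp add: image_image the_inv_into_f_f subsetD cong: image_cong)
  ultimately show ?thesis by (simp add: queue_def)
qed

lemma queue_subseq:
  assumes "K' \<subseteq> K" and "K \<subseteq> N"
  shows "subseq (queue m K') (queue m K)"
proof -
  have "finite K" using finite_jobs assms(2) finite_subset by blast
  then show ?thesis
    unfolding queue_def using assms(1) by (intro subseq_map sorted_list_of_set_subseq) auto
qed

lemma queue_append:
  assumes "inj_on (prio m) N" and "K' \<subseteq> K" and "K \<subseteq> N"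
    and "\<forall>k\<in>K'. \<forall>k'\<in>K - K'. prio m k < prio m k'"
  shows "queue m K = queue m K' @ queue m (K - K')"
proof -
  have "finite (prio m ` K)" using finite_jobs assms(3) finite_subset by blast
  moreover have "prio m ` K' \<subseteq> prio m ` K" using assms(2) by (rule image_mono)
  moreover have diff: "prio m ` K - prio m ` K' = prio m ` (K - K')"
    using assms(1-3) inj_on_image_set_diff by blast
  moreover have "\<forall>x\<in>prio m ` K'. \<forall>y\<in>prio m ` K - prio m ` K'. x < y"
    unfolding diff using assms(4) by blast
  ultimately have "sorted_list_of_set (prio m ` K) =
      sorted_list_of_set (prio m ` K') @ sorted_list_of_set (prio m ` (K - K'))"
    by (metis sorted_list_of_set_split)
  then show ?thesis by (simp add: queue_def)
qed

lemma queue_singleton: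
  assumes "inj_on (prio m) N" and "i \<in> N"
  shows "queue m {i} = [i]"
  using assms by (simp add: queue_def the_inv_into_f_f)

context
  fixes m :: 'm
  assumes inj_prio: "inj_on (prio m) N" and speed_pos: "0 < sp m"
begin

lemma queue_step_inflationary:
  assumes "K \<subseteq> N"
  shows "\<forall>k\<in>set (queue m K). \<forall>t\<ge>0. t \<le> t + p k t / sp m"
  using assms processing_nonneg speed_pos by (auto simp: set_queue[OF inj_prio])

lemma finish_time_nonneg:
  assumes "K \<subseteq> N"
  shows "0 \<le> finish_time m K"
  unfolding finish_time_def
  using foldl_inflationary[OF queue_step_inflationary[OF assms]] by simp

lemma finish_time_insert_last:
  assumes "K \<subseteq> N" and "i \<in> N" and "\<forall>k\<in>K. prio m k < prio m i"
  shows "finish_time m (insert i K) = (let S = finish_time m K in S + p i S / sp m)"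
proof -
  have "insert i K - K = {i}" using assms(3) by auto
  then have "queue m (insert i K) = queue m K @ [i]"
    using queue_append[OF inj_prio, of K "insert i K"] queue_singleton[OF inj_prio] assms
    by auto
  then show ?thesis by (simp add: finish_time_def Let_def)
qed

lemma finish_time_initial_segment:
  assumes "K' \<subseteq> K" and "K \<subseteq> N" and "\<forall>k\<in>K'. \<forall>k'\<in>K - K'. prio m k < prio m k'"
  shows "finish_time m K' \<le> finish_time m K"
proof -
  have "K' \<subseteq> N" and "K - K' \<subseteq> N" using assms(1,2) by auto
  then have "finish_time m K' \<le>
      foldl (\<lambda>t k. t + p k t / sp m) (finish_time m K') (queue m (K - K'))"
    by (intro foldl_inflationary queue_step_inflationary finish_time_nonneg)
  also have "\<dots> = finish_time m K"
    unfolding finish_time_def queue_append[OF inj_prio assms] by simp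
  finally show ?thesis .
qed

lemma finish_time_mono:
  assumes "K' \<subseteq> K" and "K \<subseteq> N"
    and delay_averse: "\<And>k. k \<in> N \<Longrightarrow> mono_on {0..} (\<lambda>t. t + p k t / sp m)"
  shows "finish_time m K' \<le> finish_time m K"
proof -
  have "\<forall>k\<in>set (queue m K). mono_on {0..} (\<lambda>t. t + p k t / sp m)"
    using assms(2) delay_averse unfolding set_queue[OF inj_prio assms(2)] by blast
  then show ?thesis
    unfolding finish_time_def
    by (intro foldl_subseq_mono queue_subseq queue_step_inflationary assms(1,2) order_refl)
qed

lemma start_le_completion_time:
  assumes "i \<in> N"
  shows "finish_time m (jobs_ahead \<sigma> m i) \<le> completion_time N prio p sp (\<sigma>(i := m)) i"
proof -
  have "0 \<le> finish_time m (jobs_ahead \<sigma> m i)"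
    by (rule finish_time_nonneg) (auto simp: jobs_ahead_def)
  then show ?thesis
    using assms processing_nonneg speed_pos by (simp add: completion_time_fun_upd Let_def)
qed

end

end

locale two_machine_game = scheduling_game N prio p sp
  for N :: "'j set" and prio :: "'m \<Rightarrow> 'j \<Rightarrow> nat"
    and p :: "'j \<Rightarrow> real \<Rightarrow> real" and sp :: "'m \<Rightarrow> real" +
  fixes m1 m2 :: 'm
  assumes machines_distinct: "m1 \<noteq> m2"
    and inj_prio_m1: "inj_on (prio m1) N"
    and bij_prio_m2: "bij_betw (prio m2) N {1..card N}"
    and speed_m2_pos: "0 < sp m2"
    and speed_m2_le: "sp m2 \<le> sp m1"
    \<comment> \<open>required only on \<open>m1\<close>; on the slower machine the argument uses just \<open>0 \<le> p k t\<close>\<close>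
    and delay_averse: "\<And>k. k \<in> N \<Longrightarrow> mono_on {0..} (\<lambda>t. t + p k t / sp m1)"
begin

lemma inj_prio_m2: "inj_on (prio m2) N"
  using bij_prio_m2 bij_betw_imp_inj_on by blast

lemma speed_m1_pos: "0 < sp m1"
  using speed_m2_pos speed_m2_le by linarith

abbreviation cost :: "('j \<Rightarrow> 'm) \<Rightarrow> 'm \<Rightarrow> 'j \<Rightarrow> real" where
  "cost \<sigma> m x \<equiv> completion_time N prio p sp (\<sigma>(x := m)) x"

definition best_response :: "('j \<Rightarrow> 'm) \<Rightarrow> 'j \<Rightarrow> bool" where
  "best_response \<sigma> x \<longleftrightarrow> (\<forall>m\<in>{m1, m2}. cost \<sigma> (\<sigma> x) x \<le> cost \<sigma> m x)"

lemma best_response_m1: "\<sigma> x = m1 \<Longrightarrow> best_response \<sigma> x \<longleftrightarrow> cost \<sigma> m1 x \<le> cost \<sigma> m2 x"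
  by (auto simp: best_response_def)

lemma best_response_m2: "\<sigma> x = m2 \<Longrightarrow> best_response \<sigma> x \<longleftrightarrow> cost \<sigma> m2 x \<le> cost \<sigma> m1 x"
  by (auto simp: best_response_def)

definition settled_upto :: "('j \<Rightarrow> 'm) \<Rightarrow> nat \<Rightarrow> bool" where
  "settled_upto \<sigma> t \<longleftrightarrow>
     (\<forall>x\<in>N. \<sigma> x = m1 \<or> \<sigma> x = m2 \<and> prio m2 x \<le> t) \<and>
     (\<forall>x\<in>N. prio m2 x \<le> t \<longrightarrow> best_response \<sigma> x)"

lemma cost_m1_mono:
  assumes "x \<in> N" and "jobs_ahead \<sigma>' m1 x \<subseteq> jobs_ahead \<sigma> m1 x"
  shows "cost \<sigma>' m1 x \<le> cost \<sigma> m1 x"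
proof -
  have "jobs_ahead \<sigma> m1 x \<subseteq> N" by (auto simp: jobs_ahead_def)
  then have "finish_time m1 (jobs_ahead \<sigma>' m1 x) \<le> finish_time m1 (jobs_ahead \<sigma> m1 x)"
    using finish_time_mono[OF inj_prio_m1 speed_m1_pos assms(2)] delay_averse by blast
  moreover have "0 \<le> finish_time m1 (jobs_ahead \<sigma>' m1 x)"
    by (rule finish_time_nonneg[OF inj_prio_m1 speed_m1_pos]) (auto simp: jobs_ahead_def)
  ultimately show ?thesis
    using mono_onD[OF delay_averse[OF assms(1)]] by (simp add: completion_time_fun_upd Let_def)
qed

lemma moving_job_starts_no_later:
  assumes "i \<in> N" and "cost \<sigma> m2 i < cost \<sigma> m1 i"
  shows "finish_time m2 (jobs_ahead \<sigma> m2 i) \<le> finish_time m1 (jobs_ahead \<sigma> m1 i)"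
proof (rule ccontr)
  define S1 where "S1 = finish_time m1 (jobs_ahead \<sigma> m1 i)"
  define S2 where "S2 = finish_time m2 (jobs_ahead \<sigma> m2 i)"
  assume "\<not> S2 \<le> S1"
  moreover have "0 \<le> S1"
    unfolding S1_def
    by (rule finish_time_nonneg[OF inj_prio_m1 speed_m1_pos]) (auto simp: jobs_ahead_def)
  ultimately have "S1 + p i S1 / sp m1 \<le> S2 + p i S2 / sp m1"
    using mono_onD[OF delay_averse[OF assms(1)]] by simp
  also have "p i S2 / sp m1 \<le> p i S2 / sp m2"
    using \<open>0 \<le> S1\<close> \<open>\<not> S2 \<le> S1\<close> assms(1) processing_nonneg speed_m2_pos speed_m2_le
    by (intro divide_left_mono) auto
  finally have "cost \<sigma> m1 i \<le> cost \<sigma> m2 i"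
    by (simp add: completion_time_fun_upd Let_def S1_def S2_def)
  with assms(2) show False by simp
qed

lemma cost_m2_le_start_of_later:
  assumes "x \<in> N" and "\<sigma> x = m2" and "prio m2 x < prio m2 i"
  shows "cost \<sigma> m2 x \<le> finish_time m2 (jobs_ahead \<sigma> m2 i)"
proof -
  have "cost \<sigma> m2 x = finish_time m2 (insert x (jobs_ahead \<sigma> m2 x))"
    using assms(1)
    by (simp add: completion_time_fun_upd jobs_ahead_def
        finish_time_insert_last[OF inj_prio_m2 speed_m2_pos])
  also have "\<dots> \<le> finish_time m2 (jobs_ahead \<sigma> m2 i)"
  proof (rule finish_time_initial_segment[OF inj_prio_m2 speed_m2_pos])
    show "insert x (jobs_ahead \<sigma> m2 x) \<subseteq> jobs_ahead \<sigma> m2 i"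
      using assms by (auto simp: jobs_ahead_def)
    have "prio m2 x < prio m2 k'" if "k' \<in> N" "k' \<noteq> x" "\<not> prio m2 k' < prio m2 x" for k'
      using that assms(1) inj_on_eq_iff[OF inj_prio_m2] by (metis linorder_neqE_nat)
    then show "\<forall>k\<in>insert x (jobs_ahead \<sigma> m2 x). \<forall>k'\<in>jobs_ahead \<sigma> m2 i - insert x (jobs_ahead \<sigma> m2 x).
        prio m2 k < prio m2 k'"
      using assms(2) by (fastforce simp: jobs_ahead_def)
  qed (auto simp: jobs_ahead_def)
  finally show ?thesis .
qed

lemma start_le_cost_of_later_m1:
  assumes "x \<in> N" and "prio m1 i < prio m1 x"
  shows "finish_time m1 (jobs_ahead \<sigma> m1 i) \<le> cost (\<sigma>(i := m)) m1 x"
proof -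
  have "jobs_ahead \<sigma> m1 i \<subseteq> jobs_ahead (\<sigma>(i := m)) m1 x" and "jobs_ahead (\<sigma>(i := m)) m1 x \<subseteq> N"
    using assms(2) by (auto simp: jobs_ahead_def)
  then have "finish_time m1 (jobs_ahead \<sigma> m1 i) \<le> finish_time m1 (jobs_ahead (\<sigma>(i := m)) m1 x)"
    using finish_time_mono[OF inj_prio_m1 speed_m1_pos] delay_averse by blast
  also have "\<dots> \<le> cost (\<sigma>(i := m)) m1 x"
    using start_le_completion_time[OF inj_prio_m1 speed_m1_pos assms(1)] .
  finally show ?thesis .
qed

lemma move_preserves_best_response_m1:
  assumes "x \<in> N" and "\<sigma> x = m1" and "x \<noteq> i" and "prio m2 x < prio m2 i"
    and "best_response \<sigma> x"
  shows "best_response (\<sigma>(i := m2)) x"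
proof -
  have "cost (\<sigma>(i := m2)) m1 x \<le> cost \<sigma> m1 x"
    using assms(1) machines_distinct by (intro cost_m1_mono) (auto simp: jobs_ahead_def)
  also have "\<dots> \<le> cost \<sigma> m2 x"
    using assms(2,5) by (simp add: best_response_m1)
  also have "\<dots> = cost (\<sigma>(i := m2)) m2 x"
    using assms(4) by (simp add: completion_time_fun_upd_behind)
  finally show ?thesis
    using assms(2,3) by (simp add: best_response_m1)
qed

lemma move_preserves_best_response_m2:
  assumes "i \<in> N" and moves: "cost \<sigma> m2 i < cost \<sigma> m1 i"
    and "x \<in> N" and "\<sigma> x = m2" and "x \<noteq> i" and "prio m2 x < prio m2 i"
    and "best_response \<sigma> x"
  shows "best_response (\<sigma>(i := m2)) x"
proof -
  have same_m2: "cost (\<sigma>(i := m2)) m2 x = cost \<sigma> m2 x"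
    using assms(6) by (simp add: completion_time_fun_upd_behind)
  have "cost \<sigma> m2 x \<le> cost (\<sigma>(i := m2)) m1 x"
  proof (cases "prio m1 x < prio m1 i")
    case True
    then show ?thesis
      using assms(4,7) by (simp add: best_response_m2 completion_time_fun_upd_behind)
  next
    case False
    then have "prio m1 i < prio m1 x"
      using assms(1,3,5) inj_on_eq_iff[OF inj_prio_m1] by (metis linorder_neqE_nat)
    have "cost \<sigma> m2 x \<le> finish_time m2 (jobs_ahead \<sigma> m2 i)"
      using assms(3,4,6) by (rule cost_m2_le_start_of_later)
    also have "\<dots> \<le> finish_time m1 (jobs_ahead \<sigma> m1 i)"
      using assms(1) moves by (rule moving_job_starts_no_later)
    also have "\<dots> \<le> cost (\<sigma>(i := m2)) m1 x"
      using assms(3) \<open>prio m1 i < prio m1 x\<close> by (rule start_le_cost_of_later_m1)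
    finally show ?thesis .
  qed
  then show ?thesis
    using assms(4,5) same_m2 by (simp add: best_response_m2)
qed

lemma settled_upto_stay:
  assumes "settled_upto \<sigma> t" and "i \<in> N" and "prio m2 i = Suc t"
    and "\<not> cost \<sigma> m2 i < cost \<sigma> m1 i"
  shows "settled_upto \<sigma> (Suc t)"
proof -
  have "\<sigma> i = m1" using assms(1-3) by (force simp: settled_upto_def)
  then have "best_response \<sigma> i" using assms(4) by (simp add: best_response_m1)
  moreover have "prio m2 x \<le> t" if "x \<in> N" "x \<noteq> i" "prio m2 x \<le> Suc t" for x
    using that assms(2,3) inj_on_eq_iff[OF inj_prio_m2] by (metis le_Suc_eq)
  ultimately show ?thesis using assms(1) by (auto simp: settled_upto_def le_Suc_eq)
qed

lemma settled_upto_move: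
  assumes "settled_upto \<sigma> t" and "i \<in> N" and "prio m2 i = Suc t"
    and moves: "cost \<sigma> m2 i < cost \<sigma> m1 i"
  shows "settled_upto (\<sigma>(i := m2)) (Suc t)"
proof -
  have "best_response (\<sigma>(i := m2)) x" if "x \<in> N" "prio m2 x \<le> Suc t" for x
  proof (cases "x = i")
    case True
    then show ?thesis using moves by (simp add: best_response_m2)
  next
    case False
    then have "prio m2 x < prio m2 i"
      using that assms(2,3) inj_on_eq_iff[OF inj_prio_m2] by (metis le_neq_implies_less)
    then have "best_response \<sigma> x" and "\<sigma> x = m1 \<or> \<sigma> x = m2"
      using assms(1,3) that(1) by (auto simp: settled_upto_def)
    then show ?thesis
      using move_preserves_best_response_m1 move_preserves_best_response_m2
        assms(2) moves that(1) False \<open>prio m2 x < prio m2 i\<close> by blast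
  qed
  then show ?thesis
    using assms(1,3) by (auto simp: settled_upto_def)
qed

lemma settled_upto_alg_profile:
  "t \<le> card N \<Longrightarrow> settled_upto (alg_profile N prio p sp m1 m2 t) t"
proof (induction t)
  case 0
  have "0 < prio m2 x" if "x \<in> N" for x
    using bij_betwE[OF bij_prio_m2] that by fastforce
  then show ?case by (fastforce simp: settled_upto_def)
next
  case (Suc t)
  define \<sigma> where "\<sigma> = alg_profile N prio p sp m1 m2 t"
  define i where "i = the_inv_into N (prio m2) (Suc t)"
  have settled: "settled_upto \<sigma> t" using Suc by (simp add: \<sigma>_def)
  have i: "i \<in> N" "prio m2 i = Suc t"
    using Suc.prems bij_prio_m2 unfolding i_def
    by (auto intro: the_inv_into_into f_the_inv_into_f_bij_betw simp: bij_betw_def)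
  then have "\<sigma> i = m1"
    using settled by (force simp: settled_upto_def)
  then have "alg_profile N prio p sp m1 m2 (Suc t) =
      (if cost \<sigma> m2 i < cost \<sigma> m1 i then \<sigma>(i := m2) else \<sigma>)"
    by (simp add: \<sigma>_def i_def Let_def fun_upd_idem)
  then show ?case
    using settled i settled_upto_move settled_upto_stay by auto
qed

theorem alg_profile_is_NE:
  "is_NE N {m1, m2} prio p sp (alg_profile N prio p sp m1 m2 (card N))"
proof -
  define \<sigma> where "\<sigma> = alg_profile N prio p sp m1 m2 (card N)"
  have settled: "settled_upto \<sigma> (card N)"
    unfolding \<sigma>_def by (rule settled_upto_alg_profile) simp
  have "prio m2 x \<le> card N" if "x \<in> N" for x
    using bij_betwE[OF bij_prio_m2] that by fastforce
  then have "best_response \<sigma> x" if "x \<in> N" for x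
    using settled that by (simp add: settled_upto_def)
  then show ?thesis
    using settled unfolding \<sigma>_def[symmetric] is_NE_def best_response_def settled_upto_def
    by (metis fun_upd_triv insertCI)
qed

end

lemma positive_deterioration_delay_averse:
  fixes a b :: real
  assumes "0 \<le> a"
  shows "mono (\<lambda>t. t + (b + a * t))"
  using assms by (intro monoI) (simp add: add_mono mult_left_mono)

lemma negative_deterioration_delay_averse:
  fixes a b \<tau> :: real
  assumes "a \<le> 1"
  shows "mono (\<lambda>t. t + max \<tau> (b - a * t))"
proof (rule monoI)
  fix t u :: real
  assume "t \<le> u"
  then have "a * (u - t) \<le> u - t"
    using mult_right_mono[OF assms, of "u - t"] by simp
  then show "t + max \<tau> (b - a * t) \<le> u + max \<tau> (b - a * u)"
    using \<open>t \<le> u\<close> by (auto simp: max_def algebra_simps)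
qed

theorem theorem2:
  fixes N :: "'j set" and prio :: "nat \<Rightarrow> 'j \<Rightarrow> nat"
    and p :: "'j \<Rightarrow> real \<Rightarrow> real" and a b tau :: "'j \<Rightarrow> real"
    and sp :: "nat \<Rightarrow> real" and s :: real
  assumes "finite N" and "N \<noteq> {}"
    and "bij_betw (prio 1) N {1..card N}" and "bij_betw (prio 2) N {1..card N}"
    and "sp 1 = 1" and "sp 2 = s" and "0 < s" and "s \<le> 1"
    and "\<forall>i\<in>N. 0 \<le> a i \<and> 0 \<le> b i"
    and "(\<forall>i\<in>N. p i = (\<lambda>t. b i + a i * t))
         \<or> (\<forall>i\<in>N. 0 < tau i \<and> a i \<le> 1 \<and> p i = (\<lambda>t. max (tau i) (b i - a i * t)))"
  shows "is_NE N {1, 2} prio p sp (alg_profile N prio p sp 1 2 (card N))"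
proof -
  have "0 \<le> p k t" if "k \<in> N" and "0 \<le> t" for k t
    using assms(9,10) that by (auto simp: max_def)
  moreover have "mono_on {0..} (\<lambda>t. t + p k t / sp 1)" if "k \<in> N" for k
  proof -
    have "mono (\<lambda>t. t + p k t)"
      using assms(9,10) that positive_deterioration_delay_averse negative_deterioration_delay_averse
      by fastforce
    then show ?thesis by (simp only: assms(5) div_by_1 mono_imp_mono_on)
  qed
  ultimately interpret two_machine_game N prio p sp 1 2
    using assms(1,3-8) by unfold_locales (auto simp: bij_betw_def)
  show ?thesis by (rule alg_profile_is_NE)
qed

end
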